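(* Let $d\ge1$ be a fixed integer and let $G$ be a uniformly random simple $d$-regular graph on $n$ labelled vertices. For a set $E$ of vertex pairs let $\mathcal{X}_E=\mathbf 1\{E\subset E(G)\}$ and $\mathcal{X}_{E^c}=\mathbf 1\{E\cap E(G)=\emptyset\}$ (write $\mathcal{X}_e$ when $E=\{e\}$). Let $E_1,E_2$ be disjoint sets of vertex pairs with $|E_i|=O(\log n)$, $i=1,2$, such that $\mathbb{P}(\mathcal{X}_{E_1}\mathcal{X}_{E_2^c}=1)>0$, and let $e$ be another pair not in $E_1\cup E_2$. Then $$\mathbb{P}(\mathcal{X}_e=1\mid\mathcal{X}_{E_1}\mathcal{X}_{E_2^c}=1)\le\frac dn+O\Big(\frac{|E_1|+|E_2|}{n^2}\Big).$$ Furthermore, if $e$ shares no vertex with any pair in $E_1\cup E_2$, then $$\mathbb{P}(\mathcal{X}_e=1\mid\mathcal{X}_{E_1}\mathcal{X}_{E_2^c}=1)=\frac dn+O\Big(\frac{|E_1|+|E_2|}{n^2}\Big).$$ The same statements hold for a uniformly random simple $d$-regular bipartite graph with $n$ vertices in each part (with all pairs taken between the two parts).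
   Context: The $O(\cdot)$ constants are uniform over all admissible $E_1,E_2,e$ with $|E_1|,|E_2|\le C\log n$ for a fixed constant $C$, and depend only on $d$ and $C$; the statements are for $n$ sufficiently large. *)

theory Defs
  imports Complex_Main
begin

definition vpairs :: "nat \<Rightarrow> nat set set" where
  "vpairs n = {{u, v} | u v. u < n \<and> v < n \<and> u \<noteq> v}"

definition reg_graphs :: "nat \<Rightarrow> nat \<Rightarrow> nat set set set" where
  "reg_graphs n d = {G. G \<subseteq> vpairs n \<and> (\<forall>v<n. card {e \<in> G. v \<in> e} = d)}"

text \<open>Simple d-regular bipartite graphs with parts 0..n-1 (left) and 0..n-1 (right);
  an edge is a pair (left vertex, right vertex).\<close>
definition bip_reg_graphs :: "nat \<Rightarrow> nat \<Rightarrow> (nat \<times> nat) set set" where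
  "bip_reg_graphs n d = {G. G \<subseteq> {..<n} \<times> {..<n} \<and>
      (\<forall>i<n. card {j. (i, j) \<in> G} = d) \<and> (\<forall>j<n. card {i. (i, j) \<in> G} = d)}"

text \<open>For a finite family of graphs (uniform measure), the conditional probability
  P(e \<in> G | E1 \<subseteq> G, E2 \<inter> G = {}).\<close>
definition cond_edge_prob :: "'a set set \<Rightarrow> 'a set \<Rightarrow> 'a set \<Rightarrow> 'a \<Rightarrow> real" where
  "cond_edge_prob \<G> E1 E2 e =
     real (card {G \<in> \<G>. E1 \<subseteq> G \<and> E2 \<inter> G = {} \<and> e \<in> G})
     / real (card {G \<in> \<G>. E1 \<subseteq> G \<and> E2 \<inter> G = {}})"

definition cond_pos :: "'a set set \<Rightarrow> 'a set \<Rightarrow> 'a set \<Rightarrow> bool" where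
  "cond_pos \<G> E1 E2 \<longleftrightarrow> {G \<in> \<G>. E1 \<subseteq> G \<and> E2 \<inter> G = {}} \<noteq> {}"

end

theory Submission
  imports Defs "HOL-Combinatorics.Permutations" "HOL-Real_Asymp.Real_Asymp"
begin

text \<open>
  Upper bound by switchings: a graph of the conditioned family that contains \<open>e = uv\<close> is switched
  along an edge \<open>xy\<close> into one containing \<open>ux, vy\<close> instead of \<open>uv, xy\<close>. All but \<open>M = O(d\<^sup>2 + |E\<^sub>1| + d |E\<^sub>2|)\<close>
  of the \<open>nd\<close> oriented edges \<open>xy\<close> are admissible, and a graph avoiding \<open>e\<close> arises from at most \<open>d\<^sup>2\<close>
  switchings, so \<open>P(e) \<le> d\<^sup>2 / (nd - M) \<le> d/n + 2M/n\<^sup>2\<close>.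

  Lower bound by averaging: the conditional probabilities of the pairs \<open>uw\<close> sum to \<open>d\<close>. Transposing
  \<open>v\<close> and \<open>w\<close> preserves the conditioned family when neither vertex is touched by \<open>E\<^sub>1 \<union> E\<^sub>2\<close>, so all
  such \<open>w\<close> carry the probability of \<open>uv\<close>; the at most \<open>2(|E\<^sub>1| + |E\<^sub>2|)\<close> remaining ones carry at most the
  upper bound each. The bipartite case is the same with \<open>v, w\<close> ranging over the right part.
\<close>

section \<open>Switching and averaging in uniform conditioned families\<close>

lemma switching_double_counting:
  fixes A B :: "'g set" and S Q :: "'g \<Rightarrow> 'k set" and sw :: "'g \<Rightarrow> 'k \<Rightarrow> 'g"
  assumes "finite A" "finite B"
    and forward: "\<And>G. G \<in> A \<Longrightarrow> finite (S G) \<and> L \<le> card (S G)"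
    and backward: "\<And>H. H \<in> B \<Longrightarrow> finite (Q H) \<and> card (Q H) \<le> D"
    and maps_to: "\<And>G k. G \<in> A \<Longrightarrow> k \<in> S G \<Longrightarrow> sw G k \<in> B \<and> k \<in> Q (sw G k)"
    and inj: "\<And>G G' k. G \<in> A \<Longrightarrow> G' \<in> A \<Longrightarrow> k \<in> S G \<Longrightarrow> k \<in> S G' \<Longrightarrow> sw G k = sw G' k \<Longrightarrow> G = G'"
  shows "card A * L \<le> D * card B"
proof -
  have "card A * L \<le> (\<Sum>G\<in>A. card (S G))"
    using sum_mono[of A "\<lambda>_. L" "\<lambda>G. card (S G)"] forward by simp
  also have "\<dots> = card (Sigma A S)" using assms(1) forward by simp
  also have "\<dots> \<le> card (Sigma B Q)"
  proof (rule card_inj_on_le[where f = "\<lambda>(G, k). (sw G k, k)"])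
    show "inj_on (\<lambda>(G, k). (sw G k, k)) (Sigma A S)"
      by (auto simp: inj_on_def intro: inj)
    show "(\<lambda>(G, k). (sw G k, k)) ` Sigma A S \<subseteq> Sigma B Q" using maps_to by auto
    show "finite (Sigma B Q)" using assms(2) backward by auto
  qed
  also have "\<dots> = (\<Sum>H\<in>B. card (Q H))" using assms(2) backward by simp
  also have "\<dots> \<le> D * card B"
    using sum_mono[of B "\<lambda>H. card (Q H)" "\<lambda>_. D"] backward by (simp add: mult.commute)
  finally show ?thesis .
qed

lemma card_insert_Diff_swap:
  assumes "finite S" "a \<in> S" "b \<notin> S"
  shows "card (insert b (S - {a})) = card S"
  using assms card_Suc_Diff1[OF assms(1,2)] by simp

lemma card_ge_of_Diff_Un3_subset:
  assumes "finite P" "S \<subseteq> P" "P - (B1 \<union> B2 \<union> B3) \<subseteq> S"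
  shows "card P - (card (P \<inter> B1) + card (P \<inter> B2) + card (P \<inter> B3)) \<le> card S"
proof -
  let ?B = "P \<inter> B1 \<union> P \<inter> B2 \<union> P \<inter> B3"
  have "card P - card ?B \<le> card (P - ?B)"
    using assms(1) by (intro diff_card_le_card_Diff) auto
  also have "\<dots> \<le> card S"
    using assms by (intro card_mono) (auto intro: finite_subset)
  finally show ?thesis
    using card_Un_le[of "P \<inter> B1 \<union> P \<inter> B2" "P \<inter> B3"] card_Un_le[of "P \<inter> B1" "P \<inter> B2"]
    by linarith
qed

lemma card_Un_preimage_Int_le:
  assumes "finite W" "finite R" "finite F" "inj h"
  shows "card ((W \<union> R \<union> {x. h x \<in> F}) \<inter> A) \<le> card W + card R + card F"
proof -
  have "card (W \<inter> A) \<le> card W" "card (R \<inter> A) \<le> card R"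
    using assms(1,2) by (auto intro: card_mono)
  moreover have "card ({x. h x \<in> F} \<inter> A) \<le> card F"
    using assms(3,4) by (intro card_inj_on_le[where f = h]) (auto intro: inj_on_subset)
  ultimately show ?thesis
    using card_Un_le[of "W \<inter> A \<union> R \<inter> A" "{x. h x \<in> F} \<inter> A"] card_Un_le[of "W \<inter> A" "R \<inter> A"]
    unfolding Int_Un_distrib2 by linarith
qed

lemma square_div_diff_le:
  fixes n d M :: real
  assumes "0 < n" "0 < d" "0 \<le> M" "2 * M \<le> n * d"
  shows "d^2 / (n * d - M) \<le> d / n + 2 * M / n^2"
proof -
  have pos: "0 < n * d - M" using assms by (smt (verit) mult_pos_pos)
  have "(d * n + 2 * M) * (n * d - M) = d^2 * n^2 + M * (n * d - 2 * M)"
    by (simp add: algebra_simps power2_eq_square)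
  then have "d^2 * n^2 \<le> (d * n + 2 * M) * (n * d - M)"
    using assms by simp
  then have "d^2 / (n * d - M) \<le> (d * n + 2 * M) / n^2"
    using pos assms by (simp add: divide_simps)
  also have "\<dots> = d / n + 2 * M / n^2"
    using assms by (simp add: field_simps power2_eq_square)
  finally show ?thesis .
qed

lemma cond_edge_prob_nonneg: "0 \<le> cond_edge_prob \<G> E1 E2 e"
  by (simp add: cond_edge_prob_def)

lemma cond_edge_prob_le_by_switching:
  fixes \<G> :: "'e set set" and n d M :: nat
  assumes "finite \<G>" "cond_pos \<G> E1 E2" "0 < n" "1 \<le> d" "2 * M \<le> n * d"
    and count: "card {G \<in> \<G>. E1 \<subseteq> G \<and> E2 \<inter> G = {} \<and> e \<in> G} * (n * d - M)
      \<le> d * d * card {G \<in> \<G>. E1 \<subseteq> G \<and> E2 \<inter> G = {} \<and> e \<notin> G}"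
  shows "cond_edge_prob \<G> E1 E2 e \<le> real d / real n + 2 * real M / (real n)^2"
proof -
  define a where "a = card {G \<in> \<G>. E1 \<subseteq> G \<and> E2 \<inter> G = {} \<and> e \<in> G}"
  define b where "b = card {G \<in> \<G>. E1 \<subseteq> G \<and> E2 \<inter> G = {} \<and> e \<notin> G}"
  define c where "c = card {G \<in> \<G>. E1 \<subseteq> G \<and> E2 \<inter> G = {}}"
  have "b \<le> c" unfolding b_def c_def using assms(1) by (intro card_mono) auto
  have "0 < c" using assms(1,2) unfolding c_def cond_pos_def by (simp add: card_gt_0_iff)
  have M: "2 * real M \<le> real n * real d" using assms(5) by (metis of_nat_le_iff of_nat_mult of_nat_numeral)
  have "real n * 1 \<le> real n * real d" using assms(4) by (intro mult_left_mono) auto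
  then have L: "0 < real n * real d - real M" using M assms(3) by linarith
  have "real a * (real n * real d - real M) = real (a * (n * d - M))"
    using assms(5) by simp
  also have "\<dots> \<le> real (d * d * c)"
    using count \<open>b \<le> c\<close> unfolding a_def b_def by (meson le_trans mult_le_mono2 of_nat_le_iff)
  finally have "real a * (real n * real d - real M) \<le> (real d)^2 * real c"
    by (simp add: power2_eq_square)
  then have "cond_edge_prob \<G> E1 E2 e \<le> (real d)^2 / (real n * real d - real M)"
    unfolding cond_edge_prob_def a_def[symmetric] c_def[symmetric]
    using \<open>0 < c\<close> L by (simp add: divide_simps mult.commute)
  also have "\<dots> \<le> real d / real n + 2 * real M / (real n)^2"
    using assms(3,4) M by (intro square_div_diff_le) auto
  finally show ?thesis .
qed

lemma sum_cond_edge_prob_eq_degree: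
  fixes edge :: "'v \<Rightarrow> 'e"
  assumes "finite \<G>" "cond_pos \<G> E1 E2" "finite W"
    and degree: "\<And>G. G \<in> \<G> \<Longrightarrow> E1 \<subseteq> G \<Longrightarrow> E2 \<inter> G = {} \<Longrightarrow> card {w \<in> W. edge w \<in> G} = d"
  shows "(\<Sum>w\<in>W. cond_edge_prob \<G> E1 E2 (edge w)) = real d"
proof -
  define \<C> where "\<C> = {G \<in> \<G>. E1 \<subseteq> G \<and> E2 \<inter> G = {}}"
  have "finite \<C>" "card \<C> > 0"
    using assms(1,2) unfolding \<C>_def cond_pos_def by (auto simp: card_gt_0_iff)
  have "(\<Sum>w\<in>W. card {G \<in> \<C>. edge w \<in> G}) = (\<Sum>w\<in>W. \<Sum>G\<in>{G \<in> \<C>. edge w \<in> G}. 1)"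
    by simp
  also have "\<dots> = (\<Sum>G\<in>\<C>. \<Sum>w\<in>{w \<in> W. edge w \<in> G}. 1)"
    using assms(3) \<open>finite \<C>\<close> by (rule sum.swap_restrict)
  also have "\<dots> = (\<Sum>G\<in>\<C>. d)"
    using degree by (intro sum.cong) (auto simp: \<C>_def)
  finally have "(\<Sum>w\<in>W. card {G \<in> \<C>. edge w \<in> G}) = d * card \<C>" by simp
  moreover have "cond_edge_prob \<G> E1 E2 (edge w) = real (card {G \<in> \<C>. edge w \<in> G}) / real (card \<C>)" for w
    unfolding cond_edge_prob_def \<C>_def by simp
  ultimately show ?thesis
    using \<open>card \<C> > 0\<close> by (simp add: sum_divide_distrib[symmetric] flip: of_nat_sum)
qed

lemma cond_edge_prob_ge_by_averaging:
  fixes edge :: "'v \<Rightarrow> 'e" and n d :: nat and c :: real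
  assumes "finite \<G>" "cond_pos \<G> E1 E2" "finite W" "card W \<le> n" "0 < n" "W0 \<subseteq> W" "0 \<le> c"
    and degree: "\<And>G. G \<in> \<G> \<Longrightarrow> E1 \<subseteq> G \<Longrightarrow> E2 \<inter> G = {} \<Longrightarrow> card {w \<in> W. edge w \<in> G} = d"
    and same: "\<And>w. w \<in> W0 \<Longrightarrow> cond_edge_prob \<G> E1 E2 (edge w) = cond_edge_prob \<G> E1 E2 e"
    and other: "\<And>w. w \<in> W - W0 \<Longrightarrow> cond_edge_prob \<G> E1 E2 (edge w) \<le> real d / real n + c / (real n)^2"
  shows "real d / real n - cond_edge_prob \<G> E1 E2 e
    \<le> real (card (W - W0)) * real d / (real n)^2 + c / (real n)^2"
proof -
  define p where "p = cond_edge_prob \<G> E1 E2 e"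
  define t where "t = real (card (W - W0))"
  have "t \<le> real n"
    using assms(3,4) card_mono[of W "W - W0"] unfolding t_def by simp
  have "real (card W0) * p \<le> real n * p"
    using assms(3,4,6) card_mono[of W W0] cond_edge_prob_nonneg[of \<G> E1 E2 e] unfolding p_def
    by (intro mult_right_mono) auto
  have "real d = (\<Sum>w\<in>W. cond_edge_prob \<G> E1 E2 (edge w))"
    using sum_cond_edge_prob_eq_degree[OF assms(1-3) degree] by metis
  also have "\<dots> = (\<Sum>w\<in>W - W0. cond_edge_prob \<G> E1 E2 (edge w)) + (\<Sum>w\<in>W0. cond_edge_prob \<G> E1 E2 (edge w))"
    by (rule sum.subset_diff[OF assms(6,3)])
  also have "(\<Sum>w\<in>W0. cond_edge_prob \<G> E1 E2 (edge w)) = real (card W0) * p"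
    using same unfolding p_def by simp
  also have "(\<Sum>w\<in>W - W0. cond_edge_prob \<G> E1 E2 (edge w)) \<le> t * (real d / real n + c / (real n)^2)"
    using sum_mono[of "W - W0", OF other] unfolding t_def by simp
  also have "t * (real d / real n + c / (real n)^2) + real (card W0) * p
      \<le> t * (real d / real n) + c / real n + real n * p"
  proof -
    have "t * (c / (real n)^2) \<le> real n * (c / (real n)^2)"
      using \<open>t \<le> real n\<close> assms(7) by (intro mult_right_mono) auto
    also have "\<dots> = c / real n" by (simp add: power2_eq_square)
    finally show ?thesis
      using \<open>real (card W0) * p \<le> real n * p\<close> by (simp add: distrib_left)
  qed
  finally have "real d / real n \<le> (t * (real d / real n) + c / real n + real n * p) / real n"
    using assms(5) by (simp add: divide_right_mono)
  also have "\<dots> = p + t * real d / (real n)^2 + c / (real n)^2"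
    using assms(5) by (simp add: field_simps power2_eq_square)
  finally show ?thesis unfolding p_def t_def by simp
qed

lemma cond_edge_prob_invariant:
  assumes involution: "\<And>x. \<sigma> (\<sigma> x) = x"
    and closed: "\<And>G. G \<in> \<G> \<Longrightarrow> \<sigma> ` G \<in> \<G>"
    and fixed: "\<And>f. f \<in> E1 \<union> E2 \<Longrightarrow> \<sigma> f = f"
  shows "cond_edge_prob \<G> E1 E2 (\<sigma> e) = cond_edge_prob \<G> E1 E2 e"
proof -
  define A where "A x = {G \<in> \<G>. E1 \<subseteq> G \<and> E2 \<inter> G = {} \<and> x \<in> G}" for x
  have twice: "\<sigma> ` \<sigma> ` G = G" for G by (simp add: image_image involution)
  have maps: "\<sigma> ` G \<in> A (\<sigma> x)" if G: "G \<in> A x" for G x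
  proof -
    have "f \<in> \<sigma> ` G" if "f \<in> E1" for f
    proof -
      have "\<sigma> f \<in> \<sigma> ` G" using G that unfolding A_def by auto
      then show ?thesis using fixed[of f] that by simp
    qed
    moreover have "f \<notin> \<sigma> ` G" if "f \<in> E2" for f
    proof
      assume "f \<in> \<sigma> ` G"
      then have "\<sigma> f \<in> G" using involution by auto
      then show False using G that fixed[of f] unfolding A_def by auto
    qed
    ultimately show ?thesis using G closed unfolding A_def by auto
  qed
  have "(`) \<sigma> ` A e = A (\<sigma> e)"
  proof
    show "(`) \<sigma> ` A e \<subseteq> A (\<sigma> e)" using maps by blast
    show "A (\<sigma> e) \<subseteq> (`) \<sigma> ` A e"
    proof
      fix H assume "H \<in> A (\<sigma> e)"
      then have "\<sigma> ` H \<in> A e" using maps[of H "\<sigma> e"] involution by simp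
      then show "H \<in> (`) \<sigma> ` A e" using twice[of H] by (metis image_eqI)
    qed
  qed
  moreover have "inj_on ((`) \<sigma>) (A e)" by (rule inj_on_inverseI) (rule twice)
  ultimately have "card (A (\<sigma> e)) = card (A e)" using card_image by metis
  then show ?thesis unfolding cond_edge_prob_def A_def by simp
qed

text \<open>Bound on the oriented edges \<open>xy\<close> unusable for switching \<open>uv\<close>: \<open>2a\<close> orientations of \<open>E\<^sub>1\<close>-edges,
  and at most \<open>d (2 + d + b)\<close> edges leaving each of the two sets of forbidden endpoints.\<close>

definition switching_loss :: "nat \<Rightarrow> nat \<Rightarrow> nat \<Rightarrow> nat" where
  "switching_loss d a b = 2 * a + 2 * d * (2 + d + b)"

lemma estimate_of_switching_bounds:
  fixes p :: real and n d a b :: nat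
  assumes upper: "p \<le> real d / real n + 2 * real (switching_loss d a b) / (real n)^2"
    and lower: "D \<Longrightarrow> real d / real n - p
      \<le> 2 * real (a + b) * real d / (real n)^2 + 2 * real (switching_loss d a b) / (real n)^2"
  shows "p \<le> real d / real n + 4 * (real d + 1)^2 * (1 + real a + real b) / (real n)^2 \<and>
    (D \<longrightarrow> \<bar>p - real d / real n\<bar> \<le> 4 * (real d + 1)^2 * (1 + real a + real b) / (real n)^2)"
proof -
  have "real (2 * d * (a + b) + 2 * switching_loss d a b) \<le> real (4 * (d + 1)^2 * (1 + a + b))"
    unfolding of_nat_le_iff by (simp add: switching_loss_def algebra_simps power2_eq_square)
  then have K: "2 * real (a + b) * real d + 2 * real (switching_loss d a b)
      \<le> 4 * (real d + 1)^2 * (1 + real a + real b)"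
    by (simp add: algebra_simps)
  then have "2 * real (switching_loss d a b) \<le> 4 * (real d + 1)^2 * (1 + real a + real b)"
    by (smt (verit) of_nat_0_le_iff mult_nonneg_nonneg)
  then have "2 * real (switching_loss d a b) / (real n)^2
      \<le> 4 * (real d + 1)^2 * (1 + real a + real b) / (real n)^2"
    by (simp add: divide_right_mono)
  moreover have "2 * real (a + b) * real d / (real n)^2 + 2 * real (switching_loss d a b) / (real n)^2
      \<le> 4 * (real d + 1)^2 * (1 + real a + real b) / (real n)^2"
    using K by (simp add: add_divide_distrib[symmetric] divide_right_mono)
  ultimately show ?thesis using upper lower by auto
qed

section \<open>Regular graphs\<close>

lemma finite_vpairs: "finite (vpairs n)"
proof -
  have "vpairs n \<subseteq> Pow {..<n}" unfolding vpairs_def by auto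
  then show ?thesis by (rule finite_subset) auto
qed

lemma doubleton_in_vpairs_iff: "{x, y} \<in> vpairs n \<longleftrightarrow> x < n \<and> y < n \<and> x \<noteq> y"
  unfolding vpairs_def by (auto simp: doubleton_eq_iff)

lemma vpairs_memberE:
  assumes "f \<in> vpairs n" "z \<in> f"
  obtains x where "f = {z, x}"
  using assms unfolding vpairs_def by auto

lemma card_Union_vpairs_le: "F \<subseteq> vpairs n \<Longrightarrow> card (\<Union>F) \<le> 2 * card F"
proof -
  assume F: "F \<subseteq> vpairs n"
  have "card (\<Union>F) \<le> (\<Sum>f\<in>F. card f)" by (rule card_Union_le_sum_card)
  also have "\<dots> = (\<Sum>f\<in>F. 2)"
    using F by (intro sum.cong) (auto simp: vpairs_def)
  finally show ?thesis by simp
qed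

lemma reg_graphs_subset_vpairs: "G \<in> reg_graphs n d \<Longrightarrow> G \<subseteq> vpairs n"
  unfolding reg_graphs_def by simp

lemma finite_reg_graphs: "finite (reg_graphs n d)"
proof -
  have "reg_graphs n d \<subseteq> Pow (vpairs n)" unfolding reg_graphs_def by auto
  then show ?thesis using finite_vpairs by (metis finite_Pow_iff finite_subset)
qed

lemma nbrs_subset_lessThan: "G \<subseteq> vpairs n \<Longrightarrow> {x. {u, x} \<in> G} \<subseteq> {..<n}"
  using doubleton_in_vpairs_iff by blast

lemma finite_nbrs: "G \<subseteq> vpairs n \<Longrightarrow> finite {x. {u, x} \<in> G}"
  by (rule finite_subset[OF nbrs_subset_lessThan]) auto

lemma card_nbrs_eq_card_incident:
  assumes "G \<subseteq> vpairs n"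
  shows "card {x. {u, x} \<in> G} = card {f \<in> G. u \<in> f}"
proof -
  have "{f \<in> G. u \<in> f} = (\<lambda>x. {u, x}) ` {x. {u, x} \<in> G}"
    using assms by (auto elim: vpairs_memberE)
  moreover have "inj_on (\<lambda>x. {u, x}) {x. {u, x} \<in> G}"
    by (auto simp: inj_on_def doubleton_eq_iff)
  ultimately show ?thesis by (simp add: card_image)
qed

lemma reg_graphs_iff_nbrs:
  "G \<in> reg_graphs n d \<longleftrightarrow> G \<subseteq> vpairs n \<and> (\<forall>u<n. card {x. {u, x} \<in> G} = d)"
  unfolding reg_graphs_def using card_nbrs_eq_card_incident by auto

lemma card_nbrs_reg: "G \<in> reg_graphs n d \<Longrightarrow> u < n \<Longrightarrow> card {x. {u, x} \<in> G} = d"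
  by (simp add: reg_graphs_iff_nbrs)

lemma reg_graphs_permute:
  assumes \<pi>: "\<pi> permutes {..<n}" and G: "G \<in> reg_graphs n d"
  shows "(`) \<pi> ` G \<in> reg_graphs n d"
proof -
  have inj: "inj \<pi>" using \<pi> by (rule permutes_inj)
  have lt: "\<pi> x < n \<longleftrightarrow> x < n" for x using permutes_in_image[OF \<pi>] by simp
  have "(`) \<pi> ` G \<subseteq> vpairs n"
  proof
    fix f assume "f \<in> (`) \<pi> ` G"
    then obtain g where "g \<in> G" "f = \<pi> ` g" by blast
    moreover obtain x y where "g = {x, y}" "x < n" "y < n" "x \<noteq> y"
      using reg_graphs_subset_vpairs[OF G] \<open>g \<in> G\<close> unfolding vpairs_def by blast
    ultimately show "f \<in> vpairs n" using inj lt by (auto simp: doubleton_in_vpairs_iff inj_eq)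
  qed
  moreover have "card {f \<in> (`) \<pi> ` G. w \<in> f} = d" if "w < n" for w
  proof -
    have "w \<in> \<pi> ` f \<longleftrightarrow> inv \<pi> w \<in> f" for f
      using permutes_inverses[OF \<pi>] by (metis image_iff)
    then have "{f \<in> (`) \<pi> ` G. w \<in> f} = (`) \<pi> ` {f \<in> G. inv \<pi> w \<in> f}" by auto
    moreover have "inj_on ((`) \<pi>) {f \<in> G. inv \<pi> w \<in> f}"
      using inj by (auto simp: inj_on_def inj_image_eq_iff)
    moreover have "inv \<pi> w < n" using permutes_in_image[OF permutes_inv[OF \<pi>]] that by simp
    ultimately show ?thesis using G by (simp add: card_image reg_graphs_def)
  qed
  ultimately show ?thesis unfolding reg_graphs_def by simp
qed

lemma card_oriented_edges_fst:
  assumes G: "G \<in> reg_graphs n d"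
  shows "card {(x, y). {x, y} \<in> G \<and> x \<in> X} = card (X \<inter> {..<n}) * d"
proof -
  have GV: "G \<subseteq> vpairs n" using G by (rule reg_graphs_subset_vpairs)
  have "{(x, y). {x, y} \<in> G \<and> x \<in> X} = (SIGMA x:X \<inter> {..<n}. {y. {x, y} \<in> G})"
    using GV doubleton_in_vpairs_iff by blast
  then have "card {(x, y). {x, y} \<in> G \<and> x \<in> X} = (\<Sum>x\<in>X \<inter> {..<n}. card {y. {x, y} \<in> G})"
    using finite_nbrs[OF GV] by simp
  also have "\<dots> = (\<Sum>x\<in>X \<inter> {..<n}. d)" using card_nbrs_reg[OF G] by (intro sum.cong) auto
  finally show ?thesis by simp
qed

lemma card_oriented_edges_snd:
  assumes G: "G \<in> reg_graphs n d"
  shows "card {(x, y). {x, y} \<in> G \<and> y \<in> X} = card (X \<inter> {..<n}) * d"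
proof -
  have "{(x, y). {x, y} \<in> G \<and> y \<in> X} = prod.swap ` {(x, y). {x, y} \<in> G \<and> x \<in> X}"
    by (auto simp: image_iff insert_commute)
  then show ?thesis
    using card_oriented_edges_fst[OF G] by (simp add: card_image)
qed

lemma card_oriented_pairs_le:
  fixes E :: "'a :: linorder set set"
  assumes "finite E" "A \<subseteq> {(x, y). {x, y} \<in> E}"
  shows "card A \<le> 2 * card E"
proof -
  define orient where "orient = (\<lambda>(f :: 'a set, b :: bool). if b then (Min f, Max f) else (Max f, Min f))"
  have "A \<subseteq> orient ` (E \<times> UNIV)"
  proof
    fix p assume "p \<in> A"
    then obtain x y where "p = (x, y)" "{x, y} \<in> E" using assms(2) by auto
    then show "p \<in> orient ` (E \<times> UNIV)"
      by (intro image_eqI[where x = "({x, y}, x \<le> y)"]) (auto simp: orient_def)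
  qed
  then have "card A \<le> card (orient ` (E \<times> UNIV))" using assms(1) by (intro card_mono) auto
  also have "\<dots> \<le> card (E \<times> (UNIV :: bool set))" using assms(1) by (intro card_image_le) auto
  finally show ?thesis by (simp add: card_cartesian_product mult.commute)
qed

definition reg_switch :: "nat set set \<Rightarrow> nat \<Rightarrow> nat \<Rightarrow> nat \<Rightarrow> nat \<Rightarrow> nat set set" where
  "reg_switch G u v x y = insert {u, x} (insert {v, y} (G - {{u, v}, {x, y}}))"

definition reg_switch_pairs ::
    "nat set set \<Rightarrow> nat set set \<Rightarrow> nat set set \<Rightarrow> nat \<Rightarrow> nat \<Rightarrow> (nat \<times> nat) set" where
  "reg_switch_pairs E1 E2 G u v = {(x, y). {x, y} \<in> G - E1 \<and> x \<notin> {u, v} \<and> y \<notin> {u, v} \<and>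
     {u, x} \<notin> G \<union> E2 \<and> {v, y} \<notin> G \<union> E2}"

lemma card_reg_forbidden_ends_le:
  assumes G: "G \<in> reg_graphs n d" and "finite E2" "w < n"
  shows "card (({u, v} \<union> {x. {w, x} \<in> G} \<union> {x. {w, x} \<in> E2}) \<inter> {..<n}) \<le> 2 + d + card E2"
proof -
  have "card (({u, v} \<union> {x. {w, x} \<in> G} \<union> {x. {w, x} \<in> E2}) \<inter> {..<n})
      \<le> card {u, v} + card {x. {w, x} \<in> G} + card E2"
    using finite_nbrs[OF reg_graphs_subset_vpairs[OF G]] assms(2)
    by (intro card_Un_preimage_Int_le[where h = "\<lambda>x. {w, x}"]) (auto simp: inj_def doubleton_eq_iff)
  moreover have "card {u, v} \<le> 2" by (cases "u = v") auto
  ultimately show ?thesis using card_nbrs_reg[OF G assms(3)] by linarith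
qed

lemma card_reg_switch_pairs_ge:
  assumes G: "G \<in> reg_graphs n d" and "finite E1" "finite E2" "u < n" "v < n"
  shows "n * d - switching_loss d (card E1) (card E2) \<le> card (reg_switch_pairs E1 E2 G u v)"
proof -
  define P where "P = {(x, y). {x, y} \<in> G}"
  define X where "X = {u, v} \<union> {x. {u, x} \<in> G} \<union> {x. {u, x} \<in> E2}"
  define Y where "Y = {u, v} \<union> {y. {v, y} \<in> G} \<union> {y. {v, y} \<in> E2}"
  have "P \<subseteq> {..<n} \<times> {..<n}"
    using reg_graphs_subset_vpairs[OF G] doubleton_in_vpairs_iff unfolding P_def by blast
  then have "finite P" by (rule finite_subset) auto
  have "card P = n * d" using card_oriented_edges_fst[OF G, of UNIV] by (simp add: P_def)
  have "card (P \<inter> {(x, y). {x, y} \<in> E1}) \<le> 2 * card E1"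
    using assms(2) by (rule card_oriented_pairs_le) auto
  moreover have "card (P \<inter> {(x, y). x \<in> X}) \<le> (2 + d + card E2) * d"
  proof -
    have "P \<inter> {(x, y). x \<in> X} = {(x, y). {x, y} \<in> G \<and> x \<in> X}" unfolding P_def by auto
    moreover have "card (X \<inter> {..<n}) \<le> 2 + d + card E2"
      unfolding X_def by (rule card_reg_forbidden_ends_le[OF G assms(3,4)])
    ultimately show ?thesis
      using card_oriented_edges_fst[OF G, of X] mult_le_mono1 by metis
  qed
  moreover have "card (P \<inter> {(x, y). y \<in> Y}) \<le> (2 + d + card E2) * d"
  proof -
    have "P \<inter> {(x, y). y \<in> Y} = {(x, y). {x, y} \<in> G \<and> y \<in> Y}" unfolding P_def by auto
    moreover have "card (Y \<inter> {..<n}) \<le> 2 + d + card E2"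
      unfolding Y_def by (rule card_reg_forbidden_ends_le[OF G assms(3,5)])
    ultimately show ?thesis
      using card_oriented_edges_snd[OF G, of Y] mult_le_mono1 by metis
  qed
  moreover have "card P - (card (P \<inter> {(x, y). {x, y} \<in> E1}) + card (P \<inter> {(x, y). x \<in> X})
      + card (P \<inter> {(x, y). y \<in> Y})) \<le> card (reg_switch_pairs E1 E2 G u v)"
    using \<open>finite P\<close> by (rule card_ge_of_Diff_Un3_subset) (auto simp: P_def X_def Y_def reg_switch_pairs_def)
  ultimately show ?thesis
    unfolding \<open>card P = n * d\<close> switching_loss_def by (simp add: algebra_simps)
qed

lemma reg_switch_in_reg_graphs:
  assumes G: "G \<in> reg_graphs n d" and uv: "{u, v} \<in> G" and xy: "{x, y} \<in> G"
    and dist: "x \<notin> {u, v}" "y \<notin> {u, v}" and new: "{u, x} \<notin> G" "{v, y} \<notin> G"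
  shows "reg_switch G u v x y \<in> reg_graphs n d"
proof -
  let ?H = "reg_switch G u v x y"
  have GV: "G \<subseteq> vpairs n" using G by (rule reg_graphs_subset_vpairs)
  have uv': "u < n" "v < n" "u \<noteq> v" and xy': "x < n" "y < n" "x \<noteq> y"
    using uv xy GV doubleton_in_vpairs_iff by blast+
  have "?H \<subseteq> vpairs n"
    using GV uv' xy' dist by (auto simp: reg_switch_def doubleton_in_vpairs_iff)
  moreover have "card {w. {z, w} \<in> ?H} = d" if "z < n" for z
  proof -
    let ?N = "{w. {z, w} \<in> G}"
    have fin: "finite ?N" using GV by (rule finite_nbrs)
    have deg: "card ?N = d" using card_nbrs_reg[OF G that] .
    have swap: "card (insert b (?N - {a})) = d" if "a \<in> ?N" "b \<notin> ?N" for a b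
      using card_insert_Diff_swap[OF fin that] deg by simp
    consider "z = u" | "z = v" | "z = x" | "z = y" | "z \<notin> {u, v, x, y}" by auto
    then show ?thesis
    proof cases
      case 1
      then have "{w. {z, w} \<in> ?H} = insert x (?N - {v})"
        using dist uv' xy' by (auto simp: reg_switch_def doubleton_eq_iff)
      then show ?thesis using swap[of v x] 1 uv new by (simp add: insert_commute)
    next
      case 2
      then have "{w. {z, w} \<in> ?H} = insert y (?N - {u})"
        using dist uv' xy' by (auto simp: reg_switch_def doubleton_eq_iff)
      then show ?thesis using swap[of u y] 2 uv new by (simp add: insert_commute)
    next
      case 3
      then have "{w. {z, w} \<in> ?H} = insert u (?N - {y})"
        using dist uv' xy' by (auto simp: reg_switch_def doubleton_eq_iff)
      then show ?thesis using swap[of y u] 3 xy new by (simp add: insert_commute)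
    next
      case 4
      then have "{w. {z, w} \<in> ?H} = insert v (?N - {x})"
        using dist uv' xy' by (auto simp: reg_switch_def doubleton_eq_iff)
      then show ?thesis using swap[of x v] 4 xy new by (simp add: insert_commute)
    next
      case 5
      then have "{w. {z, w} \<in> ?H} = ?N" by (auto simp: reg_switch_def doubleton_eq_iff)
      then show ?thesis using deg by simp
    qed
  qed
  ultimately show ?thesis by (simp add: reg_graphs_iff_nbrs)
qed

lemma reg_switch_inverse:
  assumes "{u, v} \<in> G" "{x, y} \<in> G" "x \<notin> {u, v}" "y \<notin> {u, v}" "{u, x} \<notin> G" "{v, y} \<notin> G"
  shows "reg_switch (reg_switch G u v x y) u x v y = G"
  using assms by (auto simp: reg_switch_def doubleton_eq_iff)

lemma reg_switching_count:
  assumes "finite E1" "finite E2" "{u, v} \<in> vpairs n" "{u, v} \<notin> E1"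
  shows "card {G \<in> reg_graphs n d. E1 \<subseteq> G \<and> E2 \<inter> G = {} \<and> {u, v} \<in> G}
      * (n * d - switching_loss d (card E1) (card E2))
    \<le> d * d * card {G \<in> reg_graphs n d. E1 \<subseteq> G \<and> E2 \<inter> G = {} \<and> {u, v} \<notin> G}"
proof -
  define A where "A = {G \<in> reg_graphs n d. E1 \<subseteq> G \<and> E2 \<inter> G = {} \<and> {u, v} \<in> G}"
  define B where "B = {G \<in> reg_graphs n d. E1 \<subseteq> G \<and> E2 \<inter> G = {} \<and> {u, v} \<notin> G}"
  define S where "S G = reg_switch_pairs E1 E2 G u v" for G
  define sw where "sw G k = (case k of (x, y) \<Rightarrow> reg_switch G u v x y)" for G k
  \<comment> \<open>the switching along \<open>xy\<close> is recovered from \<open>x \<in> N(u)\<close> and \<open>y \<in> N(v)\<close> in the new graph\<close>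
  define Q where "Q H = {x. {u, x} \<in> H} \<times> {y. {v, y} \<in> H}" for H
  have uv: "u < n" "v < n" "u \<noteq> v" using assms(3) by (simp_all add: doubleton_in_vpairs_iff)
  have "card A * (n * d - switching_loss d (card E1) (card E2)) \<le> d * d * card B"
  proof (rule switching_double_counting[where S = S and Q = Q and sw = sw])
    show "finite A" "finite B" unfolding A_def B_def using finite_reg_graphs by auto
    show "finite (S G) \<and> n * d - switching_loss d (card E1) (card E2) \<le> card (S G)"
      if "G \<in> A" for G
    proof
      have "S G \<subseteq> {..<n} \<times> {..<n}"
        using that reg_graphs_subset_vpairs doubleton_in_vpairs_iff
        unfolding A_def S_def reg_switch_pairs_def by blast
      then show "finite (S G)" by (rule finite_subset) auto
      show "n * d - switching_loss d (card E1) (card E2) \<le> card (S G)"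
        using that assms(1,2) uv unfolding A_def S_def by (intro card_reg_switch_pairs_ge) auto
    qed
    show "finite (Q H) \<and> card (Q H) \<le> d * d" if "H \<in> B" for H
    proof -
      have H: "H \<in> reg_graphs n d" using that unfolding B_def by simp
      show ?thesis using finite_nbrs[OF reg_graphs_subset_vpairs[OF H]] card_nbrs_reg[OF H] uv
        unfolding Q_def by (simp add: card_cartesian_product)
    qed
    show "sw G k \<in> B \<and> k \<in> Q (sw G k)" if "G \<in> A" "k \<in> S G" for G k
    proof -
      obtain x y where k: "k = (x, y)" by (cases k)
      have xy: "{x, y} \<in> G - E1" "x \<notin> {u, v}" "y \<notin> {u, v}" "{u, x} \<notin> G \<union> E2" "{v, y} \<notin> G \<union> E2"
        using that(2) unfolding k S_def reg_switch_pairs_def by auto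
      have "reg_switch G u v x y \<in> reg_graphs n d"
        using that(1) xy unfolding A_def by (intro reg_switch_in_reg_graphs) auto
      moreover have "E1 \<subseteq> reg_switch G u v x y" "E2 \<inter> reg_switch G u v x y = {}"
        "{u, v} \<notin> reg_switch G u v x y"
        using that(1) xy assms(4) uv unfolding A_def by (auto simp: reg_switch_def doubleton_eq_iff)
      ultimately show ?thesis unfolding k sw_def B_def Q_def by (auto simp: reg_switch_def)
    qed
    show "G = G'" if "G \<in> A" "G' \<in> A" "k \<in> S G" "k \<in> S G'" "sw G k = sw G' k" for G G' k
    proof -
      obtain x y where k: "k = (x, y)" by (cases k)
      have "reg_switch (reg_switch G u v x y) u x v y = G"
        using that(1,3) unfolding k A_def S_def reg_switch_pairs_def by (intro reg_switch_inverse) auto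
      moreover have "reg_switch (reg_switch G' u v x y) u x v y = G'"
        using that(2,4) unfolding k A_def S_def reg_switch_pairs_def by (intro reg_switch_inverse) auto
      ultimately show ?thesis using that(5) unfolding k sw_def by (metis case_prod_conv)
    qed
  qed
  then show ?thesis unfolding A_def B_def .
qed

lemma reg_cond_edge_prob_le:
  assumes "E1 \<subseteq> vpairs n" "E2 \<subseteq> vpairs n" "{u, v} \<in> vpairs n" "{u, v} \<notin> E1"
    and "cond_pos (reg_graphs n d) E1 E2" "1 \<le> d"
    and "2 * switching_loss d (card E1) (card E2) \<le> n * d"
  shows "cond_edge_prob (reg_graphs n d) E1 E2 {u, v}
    \<le> real d / real n + 2 * real (switching_loss d (card E1) (card E2)) / (real n)^2"
proof (rule cond_edge_prob_le_by_switching[OF finite_reg_graphs assms(5) _ assms(6,7)])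
  show "0 < n" using assms(3) by (simp add: doubleton_in_vpairs_iff)
  show "card {G \<in> reg_graphs n d. E1 \<subseteq> G \<and> E2 \<inter> G = {} \<and> {u, v} \<in> G}
      * (n * d - switching_loss d (card E1) (card E2))
    \<le> d * d * card {G \<in> reg_graphs n d. E1 \<subseteq> G \<and> E2 \<inter> G = {} \<and> {u, v} \<notin> G}"
    using assms(1-4) finite_vpairs by (intro reg_switching_count) (auto intro: finite_subset)
qed

lemma reg_cond_edge_prob_transpose:
  assumes "v < n" "w < n" "u \<noteq> v" "u \<noteq> w" and untouched: "\<forall>f \<in> E1 \<union> E2. v \<notin> f \<and> w \<notin> f"
  shows "cond_edge_prob (reg_graphs n d) E1 E2 {u, w} = cond_edge_prob (reg_graphs n d) E1 E2 {u, v}"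
proof -
  have "cond_edge_prob (reg_graphs n d) E1 E2 (transpose v w ` {u, v})
      = cond_edge_prob (reg_graphs n d) E1 E2 {u, v}"
  proof (rule cond_edge_prob_invariant)
    show "transpose v w ` transpose v w ` f = f" for f by (simp add: image_image)
    show "(`) (transpose v w) ` G \<in> reg_graphs n d" if "G \<in> reg_graphs n d" for G
      using assms(1,2) that by (intro reg_graphs_permute permutes_swap_id) auto
    show "transpose v w ` f = f" if "f \<in> E1 \<union> E2" for f
      using that untouched by (intro transpose_image_eq) auto
  qed
  moreover have "transpose v w ` {u, v} = {u, w}" using assms(3,4) by simp
  ultimately show ?thesis by simp
qed

lemma reg_cond_edge_prob_ge:
  assumes E: "E1 \<subseteq> vpairs n" "E2 \<subseteq> vpairs n" and e: "{u, v} \<in> vpairs n"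
    and disj: "\<forall>f \<in> E1 \<union> E2. {u, v} \<inter> f = {}"
    and pos: "cond_pos (reg_graphs n d) E1 E2" and d: "1 \<le> d"
    and loss: "2 * switching_loss d (card E1) (card E2) \<le> n * d"
  shows "real d / real n - cond_edge_prob (reg_graphs n d) E1 E2 {u, v}
    \<le> 2 * real (card E1 + card E2) * real d / (real n)^2
      + 2 * real (switching_loss d (card E1) (card E2)) / (real n)^2"
proof -
  have uv: "u < n" "v < n" "u \<noteq> v" using e by (simp_all add: doubleton_in_vpairs_iff)
  define T where "T = \<Union>(E1 \<union> E2)"
  define W0 where "W0 = {..<n} - {u} - T"
  have "u \<notin> T" "v \<notin> T" using disj unfolding T_def by auto
  have "card ({..<n} - {u} - W0) \<le> card T"
  proof (rule card_mono)
    show "finite T"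
      using E finite_vpairs unfolding T_def by (intro finite_Union) (auto intro: finite_subset simp: vpairs_def)
    show "{..<n} - {u} - W0 \<subseteq> T" unfolding W0_def by auto
  qed
  also have "\<dots> \<le> 2 * card (E1 \<union> E2)" unfolding T_def using E by (intro card_Union_vpairs_le) auto
  also have "\<dots> \<le> 2 * (card E1 + card E2)" using card_Un_le[of E1 E2] by simp
  finally have card_touched: "real (card ({..<n} - {u} - W0)) \<le> 2 * real (card E1 + card E2)"
    by linarith
  have "real d / real n - cond_edge_prob (reg_graphs n d) E1 E2 {u, v}
    \<le> real (card ({..<n} - {u} - W0)) * real d / (real n)^2
      + 2 * real (switching_loss d (card E1) (card E2)) / (real n)^2"
  proof (rule cond_edge_prob_ge_by_averaging[where edge = "\<lambda>w. {u, w}" and W = "{..<n} - {u}"])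
    show "finite (reg_graphs n d)" by (rule finite_reg_graphs)
    show "cond_pos (reg_graphs n d) E1 E2" by (rule pos)
    show "finite ({..<n} - {u})" "card ({..<n} - {u}) \<le> n" "0 < n" "W0 \<subseteq> {..<n} - {u}"
      "0 \<le> 2 * real (switching_loss d (card E1) (card E2))"
      using uv by (auto simp: W0_def)
    show "card {w \<in> {..<n} - {u}. {u, w} \<in> G} = d" if "G \<in> reg_graphs n d" for G
    proof -
      have "{w \<in> {..<n} - {u}. {u, w} \<in> G} = {w. {u, w} \<in> G}"
        using reg_graphs_subset_vpairs[OF that] doubleton_in_vpairs_iff by blast
      then show ?thesis using card_nbrs_reg[OF that uv(1)] by simp
    qed
    show "cond_edge_prob (reg_graphs n d) E1 E2 {u, w} = cond_edge_prob (reg_graphs n d) E1 E2 {u, v}"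
      if "w \<in> W0" for w
      using that uv \<open>v \<notin> T\<close> unfolding W0_def T_def by (intro reg_cond_edge_prob_transpose) auto
    show "cond_edge_prob (reg_graphs n d) E1 E2 {u, w}
        \<le> real d / real n + 2 * real (switching_loss d (card E1) (card E2)) / (real n)^2"
      if "w \<in> {..<n} - {u} - W0" for w
    proof (rule reg_cond_edge_prob_le[OF E _ _ pos d loss])
      show "{u, w} \<in> vpairs n" using that uv by (auto simp: doubleton_in_vpairs_iff)
      show "{u, w} \<notin> E1" using \<open>u \<notin> T\<close> unfolding T_def by auto
    qed
  qed
  also have "\<dots> \<le> 2 * real (card E1 + card E2) * real d / (real n)^2
      + 2 * real (switching_loss d (card E1) (card E2)) / (real n)^2"
    using card_touched by (simp add: divide_right_mono mult_right_mono)
  finally show ?thesis .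
qed

lemma reg_cond_edge_prob_estimate:
  assumes "E1 \<subseteq> vpairs n" "E2 \<subseteq> vpairs n" "e \<in> vpairs n" "e \<notin> E1 \<union> E2"
    and "cond_pos (reg_graphs n d) E1 E2" "1 \<le> d"
    and "2 * switching_loss d (card E1) (card E2) \<le> n * d"
  shows "cond_edge_prob (reg_graphs n d) E1 E2 e
      \<le> real d / real n + 4 * (real d + 1)^2 * (1 + real (card E1) + real (card E2)) / (real n)^2 \<and>
    ((\<forall>f \<in> E1 \<union> E2. e \<inter> f = {}) \<longrightarrow>
      \<bar>cond_edge_prob (reg_graphs n d) E1 E2 e - real d / real n\<bar>
        \<le> 4 * (real d + 1)^2 * (1 + real (card E1) + real (card E2)) / (real n)^2)"
proof -
  obtain u v where e: "e = {u, v}" using assms(3) unfolding vpairs_def by blast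
  show ?thesis
    using assms unfolding e
    by (intro estimate_of_switching_bounds reg_cond_edge_prob_le reg_cond_edge_prob_ge) auto
qed

section \<open>Bipartite regular graphs\<close>

lemma bip_reg_graphsD:
  assumes "G \<in> bip_reg_graphs n d"
  shows "G \<subseteq> {..<n} \<times> {..<n}" "i < n \<Longrightarrow> card {j. (i, j) \<in> G} = d"
    "j < n \<Longrightarrow> card {i. (i, j) \<in> G} = d"
  using assms unfolding bip_reg_graphs_def by auto

lemma finite_bip_reg_graphs: "finite (bip_reg_graphs n d)"
proof -
  have "bip_reg_graphs n d \<subseteq> Pow ({..<n} \<times> {..<n})" unfolding bip_reg_graphs_def by auto
  then show ?thesis by (rule finite_subset) auto
qed

lemma finite_row: "G \<subseteq> {..<n::nat} \<times> {..<n} \<Longrightarrow> finite {j. (i, j) \<in> G}"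
  by (rule finite_subset[of _ "{..<n}"]) auto

lemma finite_column: "G \<subseteq> {..<n::nat} \<times> {..<n} \<Longrightarrow> finite {i. (i, j) \<in> G}"
  by (rule finite_subset[of _ "{..<n}"]) auto

lemma card_bip_edges_fst:
  assumes G: "G \<in> bip_reg_graphs n d"
  shows "card {p \<in> G. fst p \<in> X} = card (X \<inter> {..<n}) * d"
proof -
  have GS: "G \<subseteq> {..<n} \<times> {..<n}" using bip_reg_graphsD[OF G] by simp
  have "{p \<in> G. fst p \<in> X} = (SIGMA i:X \<inter> {..<n}. {j. (i, j) \<in> G})" using GS by auto
  then have "card {p \<in> G. fst p \<in> X} = (\<Sum>i\<in>X \<inter> {..<n}. card {j. (i, j) \<in> G})"
    using finite_row[OF GS] by simp
  also have "\<dots> = (\<Sum>i\<in>X \<inter> {..<n}. d)" using bip_reg_graphsD(2)[OF G] by (intro sum.cong) auto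
  finally show ?thesis by simp
qed

lemma card_bip_edges_snd:
  assumes G: "G \<in> bip_reg_graphs n d"
  shows "card {p \<in> G. snd p \<in> Y} = card (Y \<inter> {..<n}) * d"
proof -
  have GS: "G \<subseteq> {..<n} \<times> {..<n}" using bip_reg_graphsD[OF G] by simp
  have swap_eq: "{p \<in> G. snd p \<in> Y} = prod.swap ` (SIGMA j:Y \<inter> {..<n}. {i. (i, j) \<in> G})"
  proof (intro set_eqI iffI)
    fix p assume "p \<in> {p \<in> G. snd p \<in> Y}"
    then show "p \<in> prod.swap ` (SIGMA j:Y \<inter> {..<n}. {i. (i, j) \<in> G})"
      using GS by (intro image_eqI[where x = "prod.swap p"]) auto
  next
    fix p assume "p \<in> prod.swap ` (SIGMA j:Y \<inter> {..<n}. {i. (i, j) \<in> G})"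
    then obtain i j where "p = (i, j)" "(i, j) \<in> G" "j \<in> Y" by force
    then show "p \<in> {p \<in> G. snd p \<in> Y}" by simp
  qed
  have "card {p \<in> G. snd p \<in> Y} = card (SIGMA j:Y \<inter> {..<n}. {i. (i, j) \<in> G})"
    unfolding swap_eq by (rule card_image[OF inj_swap])
  also have "\<dots> = (\<Sum>j\<in>Y \<inter> {..<n}. card {i. (i, j) \<in> G})"
    using finite_column[OF GS] by simp
  also have "\<dots> = (\<Sum>j\<in>Y \<inter> {..<n}. d)" using bip_reg_graphsD(3)[OF G] by (intro sum.cong) auto
  finally show ?thesis by simp
qed

lemma bip_reg_graphs_permute:
  assumes \<pi>: "\<pi> permutes {..<n}" and \<rho>: "\<rho> permutes {..<n}" and G: "G \<in> bip_reg_graphs n d"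
  shows "map_prod \<pi> \<rho> ` G \<in> bip_reg_graphs n d"
proof -
  have inj: "inj \<pi>" "inj \<rho>" using \<pi> \<rho> by (auto intro: permutes_inj)
  have lt: "\<pi> x < n \<longleftrightarrow> x < n" "\<rho> x < n \<longleftrightarrow> x < n" for x
    using permutes_in_image[OF \<pi>] permutes_in_image[OF \<rho>] by simp_all
  have mem: "(i, j) \<in> map_prod \<pi> \<rho> ` G \<longleftrightarrow> (inv \<pi> i, inv \<rho> j) \<in> G" for i j
  proof
    assume "(i, j) \<in> map_prod \<pi> \<rho> ` G"
    then obtain a b where "(a, b) \<in> G" "i = \<pi> a" "j = \<rho> b" by auto
    then show "(inv \<pi> i, inv \<rho> j) \<in> G"
      using permutes_inverses(2)[OF \<pi>] permutes_inverses(2)[OF \<rho>] by simp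
  next
    assume "(inv \<pi> i, inv \<rho> j) \<in> G"
    then show "(i, j) \<in> map_prod \<pi> \<rho> ` G"
      using permutes_inverses(1)[OF \<pi>] permutes_inverses(1)[OF \<rho>]
      by (intro image_eqI[where x = "(inv \<pi> i, inv \<rho> j)"]) simp_all
  qed
  have img: "x \<in> \<pi> ` S \<longleftrightarrow> inv \<pi> x \<in> S" "x \<in> \<rho> ` S \<longleftrightarrow> inv \<rho> x \<in> S" for x S
    using permutes_inverses[OF \<pi>] permutes_inverses[OF \<rho>] by (metis image_iff)+
  have "map_prod \<pi> \<rho> ` G \<subseteq> {..<n} \<times> {..<n}" using bip_reg_graphsD(1)[OF G] lt by auto
  moreover have "card {j. (i, j) \<in> map_prod \<pi> \<rho> ` G} = d" if "i < n" for i
  proof -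
    have "{j. (i, j) \<in> map_prod \<pi> \<rho> ` G} = \<rho> ` {j. (inv \<pi> i, j) \<in> G}"
      by (rule set_eqI) (simp add: mem img)
    moreover have "inv \<pi> i < n" using permutes_in_image[OF permutes_inv[OF \<pi>]] that by simp
    ultimately show ?thesis
      using bip_reg_graphsD(2)[OF G] inj(2) by (simp add: card_image inj_on_subset)
  qed
  moreover have "card {i. (i, j) \<in> map_prod \<pi> \<rho> ` G} = d" if "j < n" for j
  proof -
    have "{i. (i, j) \<in> map_prod \<pi> \<rho> ` G} = \<pi> ` {i. (i, inv \<rho> j) \<in> G}"
      by (rule set_eqI) (simp add: mem img)
    moreover have "inv \<rho> j < n" using permutes_in_image[OF permutes_inv[OF \<rho>]] that by simp
    ultimately show ?thesis
      using bip_reg_graphsD(3)[OF G] inj(1) by (simp add: card_image inj_on_subset)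
  qed
  ultimately show ?thesis unfolding bip_reg_graphs_def by simp
qed

definition bip_switch :: "(nat \<times> nat) set \<Rightarrow> nat \<Rightarrow> nat \<Rightarrow> nat \<Rightarrow> nat \<Rightarrow> (nat \<times> nat) set" where
  "bip_switch G u v x y = insert (u, y) (insert (x, v) (G - {(u, v), (x, y)}))"

definition bip_switch_pairs ::
    "(nat \<times> nat) set \<Rightarrow> (nat \<times> nat) set \<Rightarrow> (nat \<times> nat) set \<Rightarrow> nat \<Rightarrow> nat \<Rightarrow> (nat \<times> nat) set" where
  "bip_switch_pairs E1 E2 G u v = {(x, y). (x, y) \<in> G - E1 \<and> x \<noteq> u \<and> y \<noteq> v \<and>
     (u, y) \<notin> G \<union> E2 \<and> (x, v) \<notin> G \<union> E2}"

lemma bip_switch_in_bip_reg_graphs: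
  assumes G: "G \<in> bip_reg_graphs n d" and uv: "(u, v) \<in> G" and xy: "(x, y) \<in> G"
    and dist: "x \<noteq> u" "y \<noteq> v" and new: "(u, y) \<notin> G" "(x, v) \<notin> G"
  shows "bip_switch G u v x y \<in> bip_reg_graphs n d"
proof -
  let ?H = "bip_switch G u v x y"
  have GS: "G \<subseteq> {..<n} \<times> {..<n}" using bip_reg_graphsD(1)[OF G] .
  have "?H \<subseteq> {..<n} \<times> {..<n}" using GS uv xy by (auto simp: bip_switch_def)
  moreover have "card {j. (i, j) \<in> ?H} = d" if "i < n" for i
  proof -
    let ?R = "{j. (i, j) \<in> G}"
    have swap: "card (insert b (?R - {a})) = d" if "a \<in> ?R" "b \<notin> ?R" for a b
      using card_insert_Diff_swap[OF finite_row[OF GS] that] bip_reg_graphsD(2)[OF G \<open>i < n\<close>] by simp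
    consider "i = u" | "i = x" | "i \<noteq> u" "i \<noteq> x" by blast
    then show ?thesis
    proof cases
      case 1
      then have "{j. (i, j) \<in> ?H} = insert y (?R - {v})" using dist by (auto simp: bip_switch_def)
      then show ?thesis using swap[of v y] 1 uv new by simp
    next
      case 2
      then have "{j. (i, j) \<in> ?H} = insert v (?R - {y})" using dist by (auto simp: bip_switch_def)
      then show ?thesis using swap[of y v] 2 xy new by simp
    next
      case 3
      then have "{j. (i, j) \<in> ?H} = ?R" by (auto simp: bip_switch_def)
      then show ?thesis using bip_reg_graphsD(2)[OF G \<open>i < n\<close>] by simp
    qed
  qed
  moreover have "card {i. (i, j) \<in> ?H} = d" if "j < n" for j
  proof -
    let ?C = "{i. (i, j) \<in> G}"
    have swap: "card (insert b (?C - {a})) = d" if "a \<in> ?C" "b \<notin> ?C" for a b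
      using card_insert_Diff_swap[OF finite_column[OF GS] that] bip_reg_graphsD(3)[OF G \<open>j < n\<close>] by simp
    consider "j = v" | "j = y" | "j \<noteq> v" "j \<noteq> y" by blast
    then show ?thesis
    proof cases
      case 1
      then have "{i. (i, j) \<in> ?H} = insert x (?C - {u})" using dist by (auto simp: bip_switch_def)
      then show ?thesis using swap[of u x] 1 uv new by simp
    next
      case 2
      then have "{i. (i, j) \<in> ?H} = insert u (?C - {x})" using dist by (auto simp: bip_switch_def)
      then show ?thesis using swap[of x u] 2 xy new by simp
    next
      case 3
      then have "{i. (i, j) \<in> ?H} = ?C" by (auto simp: bip_switch_def)
      then show ?thesis using bip_reg_graphsD(3)[OF G \<open>j < n\<close>] by simp
    qed
  qed
  ultimately show ?thesis unfolding bip_reg_graphs_def by simp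
qed

lemma bip_switch_inverse:
  assumes "(u, v) \<in> G" "(x, y) \<in> G" "x \<noteq> u" "y \<noteq> v" "(u, y) \<notin> G" "(x, v) \<notin> G"
  shows "bip_switch (bip_switch G u v x y) u y x v = G"
  using assms by (auto simp: bip_switch_def)

lemma card_bip_switch_pairs_ge:
  assumes G: "G \<in> bip_reg_graphs n d" and "finite E1" "finite E2" "u < n" "v < n"
  shows "n * d - switching_loss d (card E1) (card E2) \<le> card (bip_switch_pairs E1 E2 G u v)"
proof -
  have GS: "G \<subseteq> {..<n} \<times> {..<n}" using bip_reg_graphsD(1)[OF G] .
  then have "finite G" by (rule finite_subset) auto
  define X where "X = {u} \<union> {x. (x, v) \<in> G} \<union> {x. (x, v) \<in> E2}"
  define Y where "Y = {v} \<union> {y. (u, y) \<in> G} \<union> {y. (u, y) \<in> E2}"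
  have "card G = n * d" using card_bip_edges_fst[OF G, of UNIV] by simp
  have "card (G \<inter> E1) \<le> 2 * card E1" using card_mono[OF assms(2), of "G \<inter> E1"] by simp
  moreover have "card (G \<inter> {p. fst p \<in> X}) \<le> (2 + d + card E2) * d"
  proof -
    have "card (X \<inter> {..<n}) \<le> card {u} + card {x. (x, v) \<in> G} + card E2"
      unfolding X_def using finite_column[OF GS] assms(3)
      by (intro card_Un_preimage_Int_le[where h = "\<lambda>x. (x, v)"]) (auto simp: inj_def)
    then have "card (X \<inter> {..<n}) \<le> 2 + d + card E2" using bip_reg_graphsD(3)[OF G assms(5)] by simp
    moreover have "G \<inter> {p. fst p \<in> X} = {p \<in> G. fst p \<in> X}" by auto
    ultimately show ?thesis using card_bip_edges_fst[OF G, of X] mult_le_mono1 by metis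
  qed
  moreover have "card (G \<inter> {p. snd p \<in> Y}) \<le> (2 + d + card E2) * d"
  proof -
    have "card (Y \<inter> {..<n}) \<le> card {v} + card {y. (u, y) \<in> G} + card E2"
      unfolding Y_def using finite_row[OF GS] assms(3)
      by (intro card_Un_preimage_Int_le[where h = "\<lambda>y. (u, y)"]) (auto simp: inj_def)
    then have "card (Y \<inter> {..<n}) \<le> 2 + d + card E2" using bip_reg_graphsD(2)[OF G assms(4)] by simp
    moreover have "G \<inter> {p. snd p \<in> Y} = {p \<in> G. snd p \<in> Y}" by auto
    ultimately show ?thesis using card_bip_edges_snd[OF G, of Y] mult_le_mono1 by metis
  qed
  moreover have "card G - (card (G \<inter> E1) + card (G \<inter> {p. fst p \<in> X})
      + card (G \<inter> {p. snd p \<in> Y})) \<le> card (bip_switch_pairs E1 E2 G u v)"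
    using \<open>finite G\<close> by (rule card_ge_of_Diff_Un3_subset) (auto simp: X_def Y_def bip_switch_pairs_def)
  ultimately show ?thesis
    unfolding \<open>card G = n * d\<close> switching_loss_def by (simp add: algebra_simps)
qed

lemma bip_switching_count:
  assumes "finite E1" "finite E2" "u < n" "v < n" "(u, v) \<notin> E1"
  shows "card {G \<in> bip_reg_graphs n d. E1 \<subseteq> G \<and> E2 \<inter> G = {} \<and> (u, v) \<in> G}
      * (n * d - switching_loss d (card E1) (card E2))
    \<le> d * d * card {G \<in> bip_reg_graphs n d. E1 \<subseteq> G \<and> E2 \<inter> G = {} \<and> (u, v) \<notin> G}"
proof -
  define A where "A = {G \<in> bip_reg_graphs n d. E1 \<subseteq> G \<and> E2 \<inter> G = {} \<and> (u, v) \<in> G}"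
  define B where "B = {G \<in> bip_reg_graphs n d. E1 \<subseteq> G \<and> E2 \<inter> G = {} \<and> (u, v) \<notin> G}"
  define S where "S G = bip_switch_pairs E1 E2 G u v" for G
  define sw where "sw G k = (case k of (x, y) \<Rightarrow> bip_switch G u v x y)" for G k
  define Q where "Q H = {x. (x, v) \<in> H} \<times> {y. (u, y) \<in> H}" for H
  have "card A * (n * d - switching_loss d (card E1) (card E2)) \<le> d * d * card B"
  proof (rule switching_double_counting[where S = S and Q = Q and sw = sw])
    show "finite A" "finite B" unfolding A_def B_def using finite_bip_reg_graphs by auto
    show "finite (S G) \<and> n * d - switching_loss d (card E1) (card E2) \<le> card (S G)"
      if "G \<in> A" for G
    proof
      have "S G \<subseteq> {..<n} \<times> {..<n}"
        using that bip_reg_graphsD(1) unfolding A_def S_def bip_switch_pairs_def by blast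
      then show "finite (S G)" by (rule finite_subset) auto
      show "n * d - switching_loss d (card E1) (card E2) \<le> card (S G)"
        using that assms(1-4) unfolding A_def S_def by (intro card_bip_switch_pairs_ge) auto
    qed
    show "finite (Q H) \<and> card (Q H) \<le> d * d" if "H \<in> B" for H
    proof -
      have H: "H \<in> bip_reg_graphs n d" using that unfolding B_def by simp
      show ?thesis
        using finite_column[OF bip_reg_graphsD(1)[OF H]] finite_row[OF bip_reg_graphsD(1)[OF H]]
          bip_reg_graphsD(2,3)[OF H] assms(3,4)
        unfolding Q_def by (simp add: card_cartesian_product)
    qed
    show "sw G k \<in> B \<and> k \<in> Q (sw G k)" if "G \<in> A" "k \<in> S G" for G k
    proof -
      obtain x y where k: "k = (x, y)" by (cases k)
      have xy: "(x, y) \<in> G - E1" "x \<noteq> u" "y \<noteq> v" "(u, y) \<notin> G \<union> E2" "(x, v) \<notin> G \<union> E2"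
        using that(2) unfolding k S_def bip_switch_pairs_def by auto
      have "bip_switch G u v x y \<in> bip_reg_graphs n d"
        using that(1) xy unfolding A_def by (intro bip_switch_in_bip_reg_graphs) auto
      moreover have "E1 \<subseteq> bip_switch G u v x y" "E2 \<inter> bip_switch G u v x y = {}"
        "(u, v) \<notin> bip_switch G u v x y"
        using that(1) xy assms(5) unfolding A_def by (auto simp: bip_switch_def)
      ultimately show ?thesis unfolding k sw_def B_def Q_def by (auto simp: bip_switch_def)
    qed
    show "G = G'" if "G \<in> A" "G' \<in> A" "k \<in> S G" "k \<in> S G'" "sw G k = sw G' k" for G G' k
    proof -
      obtain x y where k: "k = (x, y)" by (cases k)
      have "bip_switch (bip_switch G u v x y) u y x v = G"
        using that(1,3) unfolding k A_def S_def bip_switch_pairs_def by (intro bip_switch_inverse) auto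
      moreover have "bip_switch (bip_switch G' u v x y) u y x v = G'"
        using that(2,4) unfolding k A_def S_def bip_switch_pairs_def by (intro bip_switch_inverse) auto
      ultimately show ?thesis using that(5) unfolding k sw_def by (metis case_prod_conv)
    qed
  qed
  then show ?thesis unfolding A_def B_def .
qed

lemma bip_cond_edge_prob_le:
  assumes "E1 \<subseteq> {..<n} \<times> {..<n}" "E2 \<subseteq> {..<n} \<times> {..<n}" "u < n" "v < n" "(u, v) \<notin> E1"
    and "cond_pos (bip_reg_graphs n d) E1 E2" "1 \<le> d"
    and "2 * switching_loss d (card E1) (card E2) \<le> n * d"
  shows "cond_edge_prob (bip_reg_graphs n d) E1 E2 (u, v)
    \<le> real d / real n + 2 * real (switching_loss d (card E1) (card E2)) / (real n)^2"
proof (rule cond_edge_prob_le_by_switching[OF finite_bip_reg_graphs assms(6) _ assms(7,8)])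
  show "0 < n" using assms(3) by simp
  show "card {G \<in> bip_reg_graphs n d. E1 \<subseteq> G \<and> E2 \<inter> G = {} \<and> (u, v) \<in> G}
      * (n * d - switching_loss d (card E1) (card E2))
    \<le> d * d * card {G \<in> bip_reg_graphs n d. E1 \<subseteq> G \<and> E2 \<inter> G = {} \<and> (u, v) \<notin> G}"
    using finite_subset[OF assms(1)] finite_subset[OF assms(2)] assms(3-5)
    by (intro bip_switching_count) simp_all
qed

lemma bip_cond_edge_prob_transpose:
  assumes "v < n" "w < n" and untouched: "\<forall>f \<in> E1 \<union> E2. snd f \<noteq> v \<and> snd f \<noteq> w"
  shows "cond_edge_prob (bip_reg_graphs n d) E1 E2 (u, w) = cond_edge_prob (bip_reg_graphs n d) E1 E2 (u, v)"
proof -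
  have "cond_edge_prob (bip_reg_graphs n d) E1 E2 (map_prod id (transpose v w) (u, v))
      = cond_edge_prob (bip_reg_graphs n d) E1 E2 (u, v)"
  proof (rule cond_edge_prob_invariant)
    show "map_prod id (transpose v w) (map_prod id (transpose v w) p) = p" for p :: "nat \<times> nat"
      by (cases p) simp
    show "map_prod id (transpose v w) ` G \<in> bip_reg_graphs n d" if "G \<in> bip_reg_graphs n d" for G
      using assms(1,2) that by (intro bip_reg_graphs_permute permutes_swap_id permutes_id) auto
    show "map_prod id (transpose v w) f = f" if "f \<in> E1 \<union> E2" for f
    proof -
      have "snd f \<noteq> v" "snd f \<noteq> w" using that untouched by auto
      then show ?thesis by (cases f) simp
    qed
  qed
  then show ?thesis by simp
qed

lemma bip_cond_edge_prob_ge: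
  assumes E: "E1 \<subseteq> {..<n} \<times> {..<n}" "E2 \<subseteq> {..<n} \<times> {..<n}" and uv: "u < n" "v < n"
    and disj: "\<forall>f \<in> E1 \<union> E2. u \<noteq> fst f \<and> v \<noteq> snd f"
    and pos: "cond_pos (bip_reg_graphs n d) E1 E2" and d: "1 \<le> d"
    and loss: "2 * switching_loss d (card E1) (card E2) \<le> n * d"
  shows "real d / real n - cond_edge_prob (bip_reg_graphs n d) E1 E2 (u, v)
    \<le> 2 * real (card E1 + card E2) * real d / (real n)^2
      + 2 * real (switching_loss d (card E1) (card E2)) / (real n)^2"
proof -
  define T where "T = snd ` (E1 \<union> E2)"
  define W0 where "W0 = {..<n} - T"
  have "v \<notin> T" using disj unfolding T_def by auto
  have "finite E1" "finite E2" using finite_subset[OF E(1)] finite_subset[OF E(2)] by simp_all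
  have "card ({..<n} - W0) \<le> card T"
  proof (rule card_mono)
    show "finite T" using \<open>finite E1\<close> \<open>finite E2\<close> unfolding T_def by simp
    show "{..<n} - W0 \<subseteq> T" unfolding W0_def by auto
  qed
  also have "\<dots> \<le> card (E1 \<union> E2)" unfolding T_def by (rule card_image_le) (use \<open>finite E1\<close> \<open>finite E2\<close> in simp)
  also have "\<dots> \<le> 2 * (card E1 + card E2)" using card_Un_le[of E1 E2] by simp
  finally have card_touched: "real (card ({..<n} - W0)) \<le> 2 * real (card E1 + card E2)"
    by linarith
  have "real d / real n - cond_edge_prob (bip_reg_graphs n d) E1 E2 (u, v)
    \<le> real (card ({..<n} - W0)) * real d / (real n)^2
      + 2 * real (switching_loss d (card E1) (card E2)) / (real n)^2"
  proof (rule cond_edge_prob_ge_by_averaging[where edge = "\<lambda>w. (u, w)" and W = "{..<n}"])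
    show "finite (bip_reg_graphs n d)" by (rule finite_bip_reg_graphs)
    show "cond_pos (bip_reg_graphs n d) E1 E2" by (rule pos)
    show "finite {..<n}" "card {..<n} \<le> n" "0 < n" "W0 \<subseteq> {..<n}"
      "0 \<le> 2 * real (switching_loss d (card E1) (card E2))"
      using uv by (auto simp: W0_def)
    show "card {w \<in> {..<n}. (u, w) \<in> G} = d" if "G \<in> bip_reg_graphs n d" for G
    proof -
      have "{w \<in> {..<n}. (u, w) \<in> G} = {w. (u, w) \<in> G}" using bip_reg_graphsD(1)[OF that] by blast
      then show ?thesis using bip_reg_graphsD(2)[OF that uv(1)] by simp
    qed
    show "cond_edge_prob (bip_reg_graphs n d) E1 E2 (u, w) = cond_edge_prob (bip_reg_graphs n d) E1 E2 (u, v)"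
      if "w \<in> W0" for w
      using that uv \<open>v \<notin> T\<close> unfolding W0_def T_def by (intro bip_cond_edge_prob_transpose) force+
    show "cond_edge_prob (bip_reg_graphs n d) E1 E2 (u, w)
        \<le> real d / real n + 2 * real (switching_loss d (card E1) (card E2)) / (real n)^2"
      if "w \<in> {..<n} - W0" for w
    proof (rule bip_cond_edge_prob_le[OF E uv(1) _ _ pos d loss])
      show "w < n" using that by simp
      show "(u, w) \<notin> E1" using disj by force
    qed
  qed
  also have "\<dots> \<le> 2 * real (card E1 + card E2) * real d / (real n)^2
      + 2 * real (switching_loss d (card E1) (card E2)) / (real n)^2"
    using card_touched by (simp add: divide_right_mono mult_right_mono)
  finally show ?thesis .
qed

lemma bip_cond_edge_prob_estimate:
  assumes "E1 \<subseteq> {..<n} \<times> {..<n}" "E2 \<subseteq> {..<n} \<times> {..<n}" "e \<in> {..<n} \<times> {..<n}" "e \<notin> E1 \<union> E2"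
    and "cond_pos (bip_reg_graphs n d) E1 E2" "1 \<le> d"
    and "2 * switching_loss d (card E1) (card E2) \<le> n * d"
  shows "cond_edge_prob (bip_reg_graphs n d) E1 E2 e
      \<le> real d / real n + 4 * (real d + 1)^2 * (1 + real (card E1) + real (card E2)) / (real n)^2 \<and>
    ((\<forall>f \<in> E1 \<union> E2. fst e \<noteq> fst f \<and> snd e \<noteq> snd f) \<longrightarrow>
      \<bar>cond_edge_prob (bip_reg_graphs n d) E1 E2 e - real d / real n\<bar>
        \<le> 4 * (real d + 1)^2 * (1 + real (card E1) + real (card E2)) / (real n)^2)"
proof -
  obtain u v where e: "e = (u, v)" by (cases e)
  show ?thesis
    using assms unfolding e
    by (intro estimate_of_switching_bounds bip_cond_edge_prob_le bip_cond_edge_prob_ge) auto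
qed

lemma eventually_switching_loss_le:
  fixes C :: real
  assumes d: "1 \<le> d"
  shows "\<forall>\<^sub>F n in sequentially. \<forall>a b. real a \<le> C * ln (real n) \<longrightarrow> real b \<le> C * ln (real n) \<longrightarrow>
    2 * switching_loss d a b \<le> n * d"
proof -
  have "\<forall>\<^sub>F n in sequentially. A * ln (real n) + B \<le> real n" for A B :: real
    by real_asymp
  then have "\<forall>\<^sub>F n in sequentially.
      (4 + 4 * real d) * \<bar>C\<bar> * ln (real n) + (8 * real d + 4 * (real d)^2) \<le> real n \<and> 1 \<le> n"
    using eventually_ge_at_top[of 1] by (intro eventually_conj) auto
  then show ?thesis
  proof (rule eventually_mono, intro allI impI)
    fix n a b
    assume n: "(4 + 4 * real d) * \<bar>C\<bar> * ln (real n) + (8 * real d + 4 * (real d)^2) \<le> real n \<and> 1 \<le> n"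
      and a: "real a \<le> C * ln (real n)" and b: "real b \<le> C * ln (real n)"
    have "C * ln (real n) \<le> \<bar>C\<bar> * ln (real n)" using n by (intro mult_right_mono) auto
    have "real (2 * switching_loss d a b) = 4 * real a + 4 * real d * real b + (8 * real d + 4 * (real d)^2)"
      by (simp add: switching_loss_def algebra_simps power2_eq_square)
    also have "\<dots> \<le> 4 * (\<bar>C\<bar> * ln (real n)) + 4 * real d * (\<bar>C\<bar> * ln (real n)) + (8 * real d + 4 * (real d)^2)"
      using a b \<open>C * ln (real n) \<le> \<bar>C\<bar> * ln (real n)\<close> by (intro add_mono mult_left_mono) auto
    also have "\<dots> \<le> real n" using n by (simp add: algebra_simps)
    also have "\<dots> \<le> real (n * d)" using mult_left_mono[of 1 "real d" "real n"] d by simp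
    finally show "2 * switching_loss d a b \<le> n * d" by (simp only: of_nat_le_iff)
  qed
qed

theorem lemma6p8:
  fixes d :: nat and C :: real
  assumes "d \<ge> 1"
  shows "\<exists>K::real. \<exists>N::nat. \<forall>n\<ge>N.
    (\<forall>E1 E2 e.
       E1 \<subseteq> vpairs n \<and> E2 \<subseteq> vpairs n \<and> E1 \<inter> E2 = {} \<and>
       real (card E1) \<le> C * ln (real n) \<and> real (card E2) \<le> C * ln (real n) \<and>
       cond_pos (reg_graphs n d) E1 E2 \<and>
       e \<in> vpairs n \<and> e \<notin> E1 \<union> E2 \<longrightarrow>
         cond_edge_prob (reg_graphs n d) E1 E2 e
           \<le> real d / real n + K * (1 + real (card E1) + real (card E2)) / (real n)^2 \<and>
         ((\<forall>f \<in> E1 \<union> E2. e \<inter> f = {}) \<longrightarrow>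
           \<bar>cond_edge_prob (reg_graphs n d) E1 E2 e - real d / real n\<bar>
             \<le> K * (1 + real (card E1) + real (card E2)) / (real n)^2)) \<and>
    (\<forall>E1 E2 e.
       E1 \<subseteq> {..<n} \<times> {..<n} \<and> E2 \<subseteq> {..<n} \<times> {..<n} \<and> E1 \<inter> E2 = {} \<and>
       real (card E1) \<le> C * ln (real n) \<and> real (card E2) \<le> C * ln (real n) \<and>
       cond_pos (bip_reg_graphs n d) E1 E2 \<and>
       e \<in> {..<n} \<times> {..<n} \<and> e \<notin> E1 \<union> E2 \<longrightarrow>
         cond_edge_prob (bip_reg_graphs n d) E1 E2 e
           \<le> real d / real n + K * (1 + real (card E1) + real (card E2)) / (real n)^2 \<and>
         ((\<forall>f \<in> E1 \<union> E2. fst e \<noteq> fst f \<and> snd e \<noteq> snd f) \<longrightarrow>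
           \<bar>cond_edge_prob (bip_reg_graphs n d) E1 E2 e - real d / real n\<bar>
             \<le> K * (1 + real (card E1) + real (card E2)) / (real n)^2))"
proof -
  obtain N where N: "\<forall>n\<ge>N. \<forall>a b. real a \<le> C * ln (real n) \<longrightarrow> real b \<le> C * ln (real n) \<longrightarrow>
      2 * switching_loss d a b \<le> n * d"
    using eventually_switching_loss_le[OF assms, of C] unfolding eventually_sequentially by blast
  then have loss: "2 * switching_loss d (card E1) (card E2) \<le> n * d"
    if "N \<le> n" "real (card E1) \<le> C * ln (real n)" "real (card E2) \<le> C * ln (real n)"
    for n :: nat and E1 E2 :: "'x set"
    using that by blast
  show ?thesis
    by (intro exI[of _ "4 * (real d + 1)^2"] exI[of _ N] allI impI conjI; elim conjE)
      (simp_all add: reg_cond_edge_prob_estimate[OF _ _ _ _ _ assms loss]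
        bip_cond_edge_prob_estimate[OF _ _ _ _ _ assms loss])
qed

end
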